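(* Let $(X,d)$ be a Polish metric space, $1\le p<\infty$, and $\{m_x\}_{x\in X}$ a random walk with $m_x\in\mathcal{P}_p(X)$. Let $\nu$ be an invariant distribution for $\{m_x\}$. Then $\tilde m_\nu$ is an invariant distribution for the random walk $\{\tilde m_\mu\}_{\mu\in\mathcal{P}_p(X)}$ on $\mathcal{P}_p(X)$. Moreover, if $\nu$ is reversible for $\{m_x\}$, then $\tilde m_\nu$ is reversible for $\{\tilde m_\mu\}$.
   Context: A random walk on a metric space $Y$ is a family $\{m_y\}_{y\in Y}$ of Borel probability measures on $Y$. $\mathcal{P}_p(X)$ is the space of Borel probability measures on $X$ with finite $p$-th moment, with the $L^p$-Wasserstein metric. $\tilde m_\mu\in\mathcal{P}(\mathcal{P}_p(X))$ is defined by $\int f(\sigma)\,\tilde m_\mu(d\sigma)=\int_X f(m_x)\,\mu(dx)$ for bounded continuous $f$ on $\mathcal{P}_p(X)$ (push-forward of $\mu$ under $x\mapsto m_x$). For a random walk $m$ on $Y$ and $\mu\in\mathcal{P}(Y)$, $\mu\ast m(A)=\int_Y m_y(A)\,\mu(dy)$. A measure $\nu$ is invariant if $\nu\ast m=\nu$, and reversible if $m_x(dy)\nu(dx)=m_y(dx)\nu(dy)$ as measures on $Y\times Y$. *)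

theory Defs
  imports "HOL-Analysis.Analysis" "HOL-Probability.Probability"
begin

definition Pp :: "real \<Rightarrow> 'a::metric_space measure set" where
  "Pp p = {\<mu>. sets \<mu> = sets borel \<and> prob_space \<mu> \<and>
              (\<exists>x0. (\<integral>\<^sup>+ y. ennreal (dist x0 y powr p) \<partial>\<mu>) < \<infinity>)}"

definition couplings :: "'a::metric_space measure \<Rightarrow> 'a measure \<Rightarrow> ('a \<times> 'a) measure set" where
  "couplings \<mu> \<nu> = {\<pi>. sets \<pi> = sets (borel \<Otimes>\<^sub>M borel) \<and> prob_space \<pi> \<and>
                        distr \<pi> borel fst = \<mu> \<and> distr \<pi> borel snd = \<nu>}"

definition wasserstein :: "real \<Rightarrow> 'a::metric_space measure \<Rightarrow> 'a measure \<Rightarrow> real" where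
  "wasserstein p \<mu> \<nu> =
     enn2real (INF \<pi> \<in> couplings \<mu> \<nu>. \<integral>\<^sup>+ z. ennreal (dist (fst z) (snd z) powr p) \<partial>\<pi>) powr (1 / p)"

definition W_open :: "real \<Rightarrow> 'a::metric_space measure set \<Rightarrow> bool" where
  "W_open p U \<longleftrightarrow> U \<subseteq> Pp p \<and>
     (\<forall>\<mu>\<in>U. \<exists>e>0. \<forall>\<nu>\<in>Pp p. wasserstein p \<mu> \<nu> < e \<longrightarrow> \<nu> \<in> U)"

definition PpM :: "real \<Rightarrow> 'a::metric_space measure measure" where
  "PpM p = sigma (Pp p) {U. W_open p U}"

definition lift_walk :: "real \<Rightarrow> ('a::metric_space \<Rightarrow> 'a measure) \<Rightarrow> 'a measure \<Rightarrow> 'a measure measure" where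
  "lift_walk p m \<mu> = distr \<mu> (PpM p) m"

definition invariant_dist :: "'b measure \<Rightarrow> ('b \<Rightarrow> 'b measure) \<Rightarrow> 'b measure \<Rightarrow> bool" where
  "invariant_dist M m \<nu> \<longleftrightarrow> prob_space \<nu> \<and> sets \<nu> = sets M \<and>
     (\<forall>A\<in>sets M. (\<integral>\<^sup>+ y. emeasure (m y) A \<partial>\<nu>) = emeasure \<nu> A)"

definition reversible :: "'b measure \<Rightarrow> ('b \<Rightarrow> 'b measure) \<Rightarrow> 'b measure \<Rightarrow> bool" where
  "reversible M m \<nu> \<longleftrightarrow>
     (\<forall>C\<in>sets (M \<Otimes>\<^sub>M M).
        (\<integral>\<^sup>+ x. emeasure (m x) {y. (x, y) \<in> C} \<partial>\<nu>) =
        (\<integral>\<^sup>+ y. emeasure (m y) {x. (x, y) \<in> C} \<partial>\<nu>))"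

end

theory Submission
  imports Defs
begin

text \<open>
  Pushing forward along \<open>x \<mapsto> m x\<close> turns integrals against the lifted walk and
  the lifted measure into integrals against \<open>m\<close> and \<open>\<nu>\<close> of sets pulled back along
  \<open>m\<close>, so invariance and reversibility transfer directly. The only analytic input is that
  the identity from \<open>(P_p(X), W_p)\<close> to the Giry space of \<open>X\<close> is measurable, i.e. that
  \<open>\<sigma> \<mapsto> \<sigma>(U)\<close> is lower semicontinuous for \<open>W_p\<close> when \<open>U\<close> is open: approximate \<open>U\<close> from
  inside by closed sets at positive distance from its complement, and use Markov's inequality
  for a coupling of small transport cost.
\<close>

lemma pair_measure_in_couplings:
  fixes \<sigma> \<tau> :: "'a::metric_space measure"
  assumes "sets \<sigma> = sets borel" "sets \<tau> = sets borel" "prob_space \<sigma>" "prob_space \<tau>"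
  shows "\<sigma> \<Otimes>\<^sub>M \<tau> \<in> couplings \<sigma> \<tau>"
proof -
  interpret \<sigma>: prob_space \<sigma> by fact
  interpret \<tau>: prob_space \<tau> by fact
  interpret pair_sigma_finite \<sigma> \<tau> ..
  have "distr (\<sigma> \<Otimes>\<^sub>M \<tau>) borel fst = distr (\<sigma> \<Otimes>\<^sub>M \<tau>) \<sigma> fst"
    using assms(1) by (intro distr_cong) auto
  also have "\<dots> = \<sigma>" by (rule \<tau>.distr_pair_fst)
  finally have fst: "distr (\<sigma> \<Otimes>\<^sub>M \<tau>) borel fst = \<sigma>" .
  have snd_meas: "snd \<in> \<sigma> \<Otimes>\<^sub>M \<tau> \<rightarrow>\<^sub>M borel"
    using measurable_snd[of \<sigma> \<tau>] assms(2) by (simp cong: measurable_cong_sets)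
  have "distr (\<sigma> \<Otimes>\<^sub>M \<tau>) borel snd
      = distr (distr (\<tau> \<Otimes>\<^sub>M \<sigma>) (\<sigma> \<Otimes>\<^sub>M \<tau>) (\<lambda>(x, y). (y, x))) borel snd"
    by (rule arg_cong[where f = "\<lambda>M. distr M borel snd", OF distr_pair_swap])
  also have "\<dots> = distr (\<tau> \<Otimes>\<^sub>M \<sigma>) \<tau> fst"
    using snd_meas assms(2) by (subst distr_distr) (auto simp: comp_def case_prod_beta cong: distr_cong)
  also have "\<dots> = \<tau>" by (rule \<sigma>.distr_pair_fst)
  finally have snd: "distr (\<sigma> \<Otimes>\<^sub>M \<tau>) borel snd = \<tau>" .
  show ?thesis
    using fst snd sets_pair_measure_cong[OF assms(1,2)] prob_space_pair[OF assms(3,4)]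
    by (simp add: couplings_def)
qed

definition transport_cost :: "real \<Rightarrow> ('a::metric_space \<times> 'a) measure \<Rightarrow> ennreal" where
  "transport_cost p \<pi> = (\<integral>\<^sup>+ z. ennreal (dist (fst z) (snd z) powr p) \<partial>\<pi>)"

lemma wasserstein_transport_cost:
  "wasserstein p \<sigma> \<tau> = enn2real (INF \<pi> \<in> couplings \<sigma> \<tau>. transport_cost p \<pi>) powr (1 / p)"
  by (simp add: wasserstein_def transport_cost_def)

lemma nn_integral_coupling_fst:
  assumes "\<pi> \<in> couplings \<sigma> \<tau>" and "f \<in> borel_measurable borel"
  shows "(\<integral>\<^sup>+ z. f (fst z) \<partial>\<pi>) = (\<integral>\<^sup>+ x. f x \<partial>\<sigma>)"
proof -
  have "sets \<pi> = sets (borel \<Otimes>\<^sub>M borel)" and \<sigma>: "\<sigma> = distr \<pi> borel fst"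
    using assms(1) by (auto simp: couplings_def)
  then have "fst \<in> \<pi> \<rightarrow>\<^sub>M borel" by (simp cong: measurable_cong_sets)
  then show ?thesis unfolding \<sigma> using assms(2) by (simp add: nn_integral_distr)
qed

lemma nn_integral_coupling_snd:
  assumes "\<pi> \<in> couplings \<sigma> \<tau>" and "f \<in> borel_measurable borel"
  shows "(\<integral>\<^sup>+ z. f (snd z) \<partial>\<pi>) = (\<integral>\<^sup>+ x. f x \<partial>\<tau>)"
proof -
  have "sets \<pi> = sets (borel \<Otimes>\<^sub>M borel)" and \<tau>: "\<tau> = distr \<pi> borel snd"
    using assms(1) by (auto simp: couplings_def)
  then have "snd \<in> \<pi> \<rightarrow>\<^sub>M borel" by (simp cong: measurable_cong_sets)
  then show ?thesis unfolding \<tau> using assms(2) by (simp add: nn_integral_distr)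
qed

lemma dist_powr_le_three_powr:
  fixes x y x0 x1 :: "'a::metric_space"
  assumes "0 \<le> p"
  shows "dist x y powr p \<le> 3 powr p * (dist x0 x powr p + dist x0 x1 powr p + dist x1 y powr p)"
proof -
  define M where "M = max (dist x0 x) (max (dist x0 x1) (dist x1 y))"
  have "dist x y \<le> dist x0 x + dist x0 x1 + dist x1 y"
    using dist_triangle[of x y x0] dist_triangle[of x0 y x1] by (simp add: dist_commute)
  also have "\<dots> \<le> 3 * M" unfolding M_def by linarith
  finally have "dist x y powr p \<le> (3 * M) powr p"
    using assms by (simp add: powr_mono2)
  also have "\<dots> = 3 powr p * M powr p" by (simp add: powr_mult M_def)
  finally have "dist x y powr p \<le> 3 powr p * M powr p" .
  moreover have "M powr p \<le> dist x0 x powr p + dist x0 x1 powr p + dist x1 y powr p"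
    unfolding M_def by (auto simp: max_def)
  ultimately show ?thesis by (smt (verit) mult_left_mono powr_ge_zero)
qed

lemma transport_cost_pair_measure_finite:
  fixes \<sigma> \<tau> :: "'a::{metric_space, second_countable_topology} measure"
  assumes "0 \<le> p" and "\<sigma> \<in> Pp p" and "\<tau> \<in> Pp p"
  shows "transport_cost p (\<sigma> \<Otimes>\<^sub>M \<tau>) < \<infinity>"
proof -
  obtain x0 where x0: "(\<integral>\<^sup>+ x. ennreal (dist x0 x powr p) \<partial>\<sigma>) < \<infinity>"
    and \<sigma>: "sets \<sigma> = sets borel" "prob_space \<sigma>" using assms(2) by (auto simp: Pp_def)
  obtain x1 where x1: "(\<integral>\<^sup>+ y. ennreal (dist x1 y powr p) \<partial>\<tau>) < \<infinity>"
    and \<tau>: "sets \<tau> = sets borel" "prob_space \<tau>" using assms(3) by (auto simp: Pp_def)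
  define \<pi> where "\<pi> = \<sigma> \<Otimes>\<^sub>M \<tau>"
  have \<pi>: "\<pi> \<in> couplings \<sigma> \<tau>" unfolding \<pi>_def using \<sigma> \<tau> by (intro pair_measure_in_couplings)
  then have "sets \<pi> = sets (borel \<Otimes>\<^sub>M borel)" and "prob_space \<pi>" by (auto simp: couplings_def)
  then interpret \<pi>: prob_space \<pi> by simp
  have f: "(\<lambda>z. ennreal (dist x0 (fst z) powr p)) \<in> borel_measurable \<pi>"
    and g: "(\<lambda>z. ennreal (dist x1 (snd z) powr p)) \<in> borel_measurable \<pi>"
    unfolding measurable_cong_sets[OF \<open>sets \<pi> = _\<close> refl] by measurable
  have moment: "(\<lambda>x. ennreal (dist y x powr p)) \<in> borel_measurable borel" for y :: 'a
    by measurable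
  define B where "B = dist x0 x1 powr p"
  have "transport_cost p \<pi> \<le> (\<integral>\<^sup>+ z. ennreal (3 powr p) *
      (ennreal (dist x0 (fst z) powr p) + ennreal B + ennreal (dist x1 (snd z) powr p)) \<partial>\<pi>)"
    unfolding transport_cost_def
  proof (rule nn_integral_mono)
    fix z :: "'a \<times> 'a"
    have "dist (fst z) (snd z) powr p \<le> 3 powr p * (dist x0 (fst z) powr p + B + dist x1 (snd z) powr p)"
      unfolding B_def by (rule dist_powr_le_three_powr[OF assms(1)])
    then show "ennreal (dist (fst z) (snd z) powr p) \<le>
        ennreal (3 powr p) * (ennreal (dist x0 (fst z) powr p) + ennreal B + ennreal (dist x1 (snd z) powr p))"
      by (simp add: B_def ennreal_mult'[symmetric] ennreal_plus[symmetric] del: ennreal_plus)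
  qed
  also have "\<dots> = ennreal (3 powr p) * ((\<integral>\<^sup>+ x. ennreal (dist x0 x powr p) \<partial>\<sigma>) + ennreal B + (\<integral>\<^sup>+ y. ennreal (dist x1 y powr p) \<partial>\<tau>))"
    using f g nn_integral_coupling_fst[OF \<pi> moment] nn_integral_coupling_snd[OF \<pi> moment]
    by (simp add: nn_integral_cmult nn_integral_add \<pi>.emeasure_space_1)
  also have "\<dots> < \<infinity>" using x0 x1 by (simp add: B_def ennreal_mult_less_top)
  finally show ?thesis unfolding \<pi>_def .
qed

lemma open_Union_closed_separated:
  fixes U :: "'a::metric_space set"
  assumes "open U"
  obtains V :: "nat \<Rightarrow> 'a set"
  where "incseq V" "\<And>n. closed (V n)" "(\<Union>n. V n) = U"
    "\<And>n x y. x \<in> V n \<Longrightarrow> y \<notin> U \<Longrightarrow> 1 / real (Suc n) \<le> dist x y"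
proof
  define V where "V n = (\<Inter>y\<in>-U. {x. 1 / real (Suc n) \<le> dist x y})" for n
  show "closed (V n)" for n
    unfolding V_def by (intro closed_INT ballI closed_Collect_le continuous_intros)
  show "1 / real (Suc n) \<le> dist x y" if "x \<in> V n" "y \<notin> U" for n x y
    using that by (auto simp: V_def)
  show "incseq V"
  proof (rule incseq_SucI)
    have "1 / real (Suc (Suc n)) \<le> 1 / real (Suc n)" for n by (simp add: frac_le)
    then show "V n \<subseteq> V (Suc n)" for n unfolding V_def by (auto intro: order_trans)
  qed
  show "(\<Union>n. V n) = U"
  proof
    show "(\<Union>n. V n) \<subseteq> U" by (force simp: V_def)
    show "U \<subseteq> (\<Union>n. V n)"
    proof
      fix x assume "x \<in> U"
      then obtain r where "r > 0" "ball x r \<subseteq> U" using assms openE by blast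
      moreover obtain n where "1 / real (Suc n) < r" using \<open>r > 0\<close> nat_approx_posE by blast
      ultimately have "x \<in> V n" by (force simp: V_def)
      then show "x \<in> (\<Union>n. V n)" by auto
    qed
  qed
qed

lemma sets_dist_ge:
  fixes \<pi> :: "('a::{metric_space, second_countable_topology} \<times> 'a) measure"
  assumes "sets \<pi> = sets (borel \<Otimes>\<^sub>M borel)"
  shows "{z. \<delta> \<le> dist (fst z) (snd z)} \<in> sets \<pi>"
proof -
  have "{z \<in> space (borel \<Otimes>\<^sub>M borel). \<delta> \<le> dist (fst z) (snd (z :: 'a \<times> 'a))} \<in> sets (borel \<Otimes>\<^sub>M borel)"
    by measurable
  then show ?thesis by (simp add: assms space_pair_measure)
qed

lemma emeasure_dist_ge_le_transport_cost:
  fixes \<pi> :: "('a::{metric_space, second_countable_topology} \<times> 'a) measure"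
  assumes "sets \<pi> = sets (borel \<Otimes>\<^sub>M borel)" and "0 \<le> \<delta>" and "0 \<le> p"
  shows "ennreal (\<delta> powr p) * emeasure \<pi> {z. \<delta> \<le> dist (fst z) (snd z)} \<le> transport_cost p \<pi>"
proof -
  define S where "S = {z :: 'a \<times> 'a. \<delta> \<le> dist (fst z) (snd z)}"
  have "S \<in> sets \<pi>" unfolding S_def using assms(1) by (rule sets_dist_ge)
  then have "ennreal (\<delta> powr p) * emeasure \<pi> S = (\<integral>\<^sup>+ z. ennreal (\<delta> powr p) * indicator S z \<partial>\<pi>)"
    by (simp add: nn_integral_cmult_indicator)
  also have "\<dots> \<le> transport_cost p \<pi>"
    unfolding transport_cost_def
    by (intro nn_integral_mono) (auto simp: S_def indicator_def intro!: powr_mono2 assms)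
  finally show ?thesis unfolding S_def .
qed

lemma measure_le_coupling_separated:
  fixes \<sigma> \<tau> :: "'a::{metric_space, second_countable_topology} measure"
  assumes \<pi>: "\<pi> \<in> couplings \<sigma> \<tau>" and "V \<in> sets borel" "U \<in> sets borel"
    and sep: "\<And>x y. x \<in> V \<Longrightarrow> y \<notin> U \<Longrightarrow> \<delta> \<le> dist x y"
  shows "measure \<sigma> V \<le> measure \<tau> U + measure \<pi> {z. \<delta> \<le> dist (fst z) (snd z)}"
proof -
  have sets_\<pi>: "sets \<pi> = sets (borel \<Otimes>\<^sub>M borel)" and "prob_space \<pi>"
    and \<sigma>: "\<sigma> = distr \<pi> borel fst" and \<tau>: "\<tau> = distr \<pi> borel snd"
    using \<pi> by (auto simp: couplings_def)
  interpret \<pi>: prob_space \<pi> by fact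
  have space_\<pi>: "space \<pi> = UNIV"
    using sets_eq_imp_space_eq[OF sets_\<pi>] by (simp add: space_pair_measure)
  have [measurable]: "fst \<in> \<pi> \<rightarrow>\<^sub>M borel" "snd \<in> \<pi> \<rightarrow>\<^sub>M borel"
    using sets_\<pi> by (simp_all cong: measurable_cong_sets)
  define S where "S = {z :: 'a \<times> 'a. \<delta> \<le> dist (fst z) (snd z)}"
  have S: "S \<in> sets \<pi>" unfolding S_def using sets_\<pi> by (rule sets_dist_ge)
  have UNIV_U: "UNIV \<times> U \<in> sets \<pi>" using \<open>U \<in> sets borel\<close> by (simp add: sets_\<pi>)
  have "measure \<sigma> V = measure \<pi> (V \<times> UNIV)"
    unfolding \<sigma> using \<open>V \<in> sets borel\<close>
    by (subst measure_distr) (auto simp: space_\<pi> vimage_def intro!: arg_cong[where f = "measure \<pi>"])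
  also have "\<dots> \<le> measure \<pi> ((UNIV \<times> U) \<union> S)"
    using UNIV_U S by (intro \<pi>.finite_measure_mono) (auto simp: S_def dest: sep)
  also have "\<dots> \<le> measure \<pi> (UNIV \<times> U) + measure \<pi> S"
    using UNIV_U S by (rule measure_subadditive) auto
  also have "measure \<pi> (UNIV \<times> U) = measure \<tau> U"
    unfolding \<tau> using \<open>U \<in> sets borel\<close>
    by (subst measure_distr) (auto simp: space_\<pi> vimage_def intro!: arg_cong[where f = "measure \<pi>"])
  finally show ?thesis unfolding S_def .
qed

lemma couplings_transport_cost_less:
  fixes \<sigma> \<tau> :: "'a::{metric_space, second_countable_topology} measure"
  assumes "0 < p" "\<sigma> \<in> Pp p" "\<tau> \<in> Pp p" and "0 < c"
    and "wasserstein p \<sigma> \<tau> < c powr (1 / p)"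
  obtains \<pi> where "\<pi> \<in> couplings \<sigma> \<tau>" "transport_cost p \<pi> < ennreal c"
proof -
  define I where "I = (INF \<pi> \<in> couplings \<sigma> \<tau>. transport_cost p \<pi>)"
  have "\<sigma> \<Otimes>\<^sub>M \<tau> \<in> couplings \<sigma> \<tau>"
    using assms(2,3) by (intro pair_measure_in_couplings) (auto simp: Pp_def)
  then have "I \<le> transport_cost p (\<sigma> \<Otimes>\<^sub>M \<tau>)" unfolding I_def by (rule INF_lower)
  also have "\<dots> < \<infinity>" using assms(1-3) by (intro transport_cost_pair_measure_finite) auto
  finally have "I < \<infinity>" \<comment> \<open>otherwise \<open>enn2real\<close> would make the distance \<open>0\<close>\<close> .
  moreover have "enn2real I < c"
  proof (rule ccontr)
    assume "\<not> enn2real I < c"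
    then have "c powr (1 / p) \<le> enn2real I powr (1 / p)" using assms(1,4) by (intro powr_mono2) auto
    then show False using assms(5) by (simp add: wasserstein_transport_cost I_def)
  qed
  ultimately have "I < ennreal c"
    using assms(4) by (cases I rule: ennreal_cases) (auto simp: ennreal_less_iff)
  then show ?thesis using that unfolding I_def by (auto simp: INF_less_iff)
qed

lemma measure_open_lower_semicontinuous:
  fixes U :: "'a::{metric_space, second_countable_topology} set"
  assumes "open U" and "0 < p" and \<sigma>: "\<sigma> \<in> Pp p" and "a < measure \<sigma> U"
  shows "\<exists>e>0. \<forall>\<tau>\<in>Pp p. wasserstein p \<sigma> \<tau> < e \<longrightarrow> a < measure \<tau> U"
proof -
  interpret \<sigma>: prob_space \<sigma> using \<sigma> by (simp add: Pp_def)
  have sets_\<sigma>: "sets \<sigma> = sets borel" using \<sigma> by (simp add: Pp_def)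
  obtain V where "incseq V" and V_closed: "\<And>n. closed (V n)" and "(\<Union>n. V n) = U"
    and V_sep: "\<And>n x y. x \<in> V n \<Longrightarrow> y \<notin> U \<Longrightarrow> 1 / real (Suc n) \<le> dist x y"
    using open_Union_closed_separated[OF \<open>open U\<close>] by blast
  then have "(\<lambda>n. measure \<sigma> (V n)) \<longlonglongrightarrow> measure \<sigma> U"
    using \<sigma>.finite_Lim_measure_incseq[of V] V_closed by (simp add: image_subset_iff sets_\<sigma> borel_closed)
  then obtain n where n: "a < measure \<sigma> (V n)"
    using \<open>a < measure \<sigma> U\<close> by (metis eventually_sequentially order_tendstoD(1) order_refl)
  define \<delta> where "\<delta> = 1 / real (Suc n)"
  define \<eta> where "\<eta> = measure \<sigma> (V n) - a"
  define c where "c = \<eta> * \<delta> powr p"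
  have "0 < \<delta>" "0 < \<eta>" "0 < c" using n by (simp_all add: \<delta>_def \<eta>_def c_def)
  show ?thesis
  proof (intro exI[of _ "c powr (1 / p)"] conjI ballI impI)
    show "0 < c powr (1 / p)" using \<open>0 < c\<close> by simp
    fix \<tau> assume "\<tau> \<in> Pp p" and "wasserstein p \<sigma> \<tau> < c powr (1 / p)"
    then obtain \<pi> where \<pi>: "\<pi> \<in> couplings \<sigma> \<tau>" and cost: "transport_cost p \<pi> < ennreal c"
      using couplings_transport_cost_less \<open>0 < p\<close> \<sigma> \<open>0 < c\<close> by metis
    interpret \<pi>: prob_space \<pi> using \<pi> by (simp add: couplings_def)
    define S where "S = {z :: 'a \<times> 'a. \<delta> \<le> dist (fst z) (snd z)}"
    have "ennreal (\<delta> powr p) * emeasure \<pi> S < ennreal (\<eta> * \<delta> powr p)"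
      using emeasure_dist_ge_le_transport_cost[of \<pi> \<delta> p] \<pi> cost \<open>0 < \<delta>\<close> \<open>0 < p\<close>
      by (auto simp: S_def c_def couplings_def)
    then have "measure \<pi> S < \<eta>"
      using \<open>0 < \<delta>\<close> \<open>0 < \<eta>\<close>
      by (simp add: \<pi>.emeasure_eq_measure ennreal_mult''[symmetric] ennreal_less_iff mult.commute)
    moreover have "measure \<sigma> (V n) \<le> measure \<tau> U + measure \<pi> S"
      unfolding S_def using \<pi> V_closed \<open>open U\<close> V_sep[of _ n]
      by (intro measure_le_coupling_separated) (auto simp: \<delta>_def)
    ultimately show "a < measure \<tau> U" by (simp add: \<eta>_def)
  qed
qed

lemma space_PpM: "space (PpM p) = Pp p"
  unfolding PpM_def by (rule space_measure_of) (auto simp: W_open_def)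

lemma sets_PpM_W_open: "W_open p U \<Longrightarrow> U \<in> sets (PpM p)"
  unfolding PpM_def by (subst sets_measure_of) (auto simp: W_open_def)

lemma borel_measurable_emeasure_open_PpM:
  fixes U :: "'a::{metric_space, second_countable_topology} set"
  assumes "open U" and "0 < p"
  shows "(\<lambda>\<sigma>. emeasure \<sigma> U) \<in> borel_measurable (PpM p)"
proof -
  have "(\<lambda>\<sigma>. measure \<sigma> U) \<in> borel_measurable (PpM p)"
    unfolding borel_measurable_iff_greater
  proof
    fix a
    have "W_open p {\<sigma> \<in> Pp p. a < measure \<sigma> U}"
      unfolding W_open_def using measure_open_lower_semicontinuous[OF assms] by blast
    then show "{\<sigma> \<in> space (PpM p). a < measure \<sigma> U} \<in> sets (PpM p)"
      unfolding space_PpM by (rule sets_PpM_W_open)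
  qed
  then have "(\<lambda>\<sigma>. ennreal (measure \<sigma> U)) \<in> borel_measurable (PpM p)" by measurable
  then show ?thesis
    by (rule measurable_cong[THEN iffD1, rotated])
      (auto simp: space_PpM Pp_def finite_measure.emeasure_eq_measure prob_space_def)
qed

lemma measurable_id_PpM_subprob_algebra:
  assumes "0 < p"
  shows "(\<lambda>\<sigma>. \<sigma>) \<in> PpM p \<rightarrow>\<^sub>M subprob_algebra (borel :: 'a::{metric_space, second_countable_topology} measure)"
proof -
  have "(\<lambda>\<sigma>. \<sigma>) \<in> PpM p \<rightarrow>\<^sub>M prob_algebra (borel :: 'a measure)"
    by (rule measurable_prob_algebra_generated[OF sets_borel])
      (auto simp: Int_stable_def space_PpM Pp_def borel_measurable_emeasure_open_PpM assms)
  then show ?thesis unfolding prob_algebra_def measurable_restrict_space2_iff by simp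
qed

lemma emeasure_lift_walk:
  assumes "m \<in> borel \<rightarrow>\<^sub>M PpM p" and "\<sigma> \<in> Pp p" and "A \<in> sets (PpM p)"
  shows "emeasure (lift_walk p m \<sigma>) A = emeasure \<sigma> (m -` A)"
proof -
  have "sets \<sigma> = sets borel" using assms(2) by (simp add: Pp_def)
  then have "m \<in> \<sigma> \<rightarrow>\<^sub>M PpM p" and "space \<sigma> = UNIV"
    using assms(1) sets_eq_imp_space_eq[of \<sigma> borel] by (simp_all cong: measurable_cong_sets)
  then show ?thesis unfolding lift_walk_def using assms(3) by (simp add: emeasure_distr)
qed

lemma nn_integral_lift_walk_section:
  fixes m :: "'a::{metric_space, second_countable_topology} \<Rightarrow> 'a measure"
  assumes "0 < p" and meas: "m \<in> borel \<rightarrow>\<^sub>M PpM p" and "sets \<nu> = sets borel"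
    and C: "C \<in> sets (PpM p \<Otimes>\<^sub>M PpM p)"
  shows "(\<integral>\<^sup>+ \<sigma>. emeasure (lift_walk p m \<sigma>) {\<tau>. (\<sigma>, \<tau>) \<in> C} \<partial>lift_walk p m \<nu>)
       = (\<integral>\<^sup>+ x. emeasure (m x) {y. (m x, m y) \<in> C} \<partial>\<nu>)"
proof -
  have m_\<nu>: "m \<in> \<nu> \<rightarrow>\<^sub>M PpM p" using meas \<open>sets \<nu> = _\<close> by (simp cong: measurable_cong_sets)
  have "(\<lambda>z. (fst z, m (snd z))) \<in> PpM p \<Otimes>\<^sub>M borel \<rightarrow>\<^sub>M PpM p \<Otimes>\<^sub>M PpM p"
    using meas by measurable
  from measurable_sets[OF this C]
  have "(SIGMA \<sigma>:space (PpM p). {y. (\<sigma>, m y) \<in> C}) \<in> sets (PpM p \<Otimes>\<^sub>M borel)"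
    by (rule back_subst) (auto simp: space_pair_measure)
  from emeasure_measurable_subprob_algebra2[OF this measurable_id_PpM_subprob_algebra[OF \<open>0 < p\<close>]]
  have section_meas: "(\<lambda>\<sigma>. emeasure \<sigma> {y. (\<sigma>, m y) \<in> C}) \<in> borel_measurable (PpM p)" .
  have "(\<integral>\<^sup>+ \<sigma>. emeasure (lift_walk p m \<sigma>) {\<tau>. (\<sigma>, \<tau>) \<in> C} \<partial>lift_walk p m \<nu>)
      = (\<integral>\<^sup>+ \<sigma>. emeasure \<sigma> {y. (\<sigma>, m y) \<in> C} \<partial>lift_walk p m \<nu>)"
  proof (rule nn_integral_cong)
    fix \<sigma> assume "\<sigma> \<in> space (lift_walk p m \<nu>)"
    then have "\<sigma> \<in> Pp p" by (simp add: lift_walk_def space_PpM)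
    moreover have "{\<tau>. (\<sigma>, \<tau>) \<in> C} \<in> sets (PpM p)"
      using sets_Pair1[OF C] by (simp add: vimage_def)
    ultimately show "emeasure (lift_walk p m \<sigma>) {\<tau>. (\<sigma>, \<tau>) \<in> C} = emeasure \<sigma> {y. (\<sigma>, m y) \<in> C}"
      using meas by (simp add: emeasure_lift_walk vimage_def)
  qed
  also have "\<dots> = (\<integral>\<^sup>+ x. emeasure (m x) {y. (m x, m y) \<in> C} \<partial>\<nu>)"
    unfolding lift_walk_def using m_\<nu> section_meas by (simp add: nn_integral_distr)
  finally show ?thesis .
qed

lemma invariant_dist_lift_walk:
  fixes m :: "'a::{metric_space, second_countable_topology} \<Rightarrow> 'a measure"
  assumes "0 < p" and meas: "m \<in> borel \<rightarrow>\<^sub>M PpM p" and inv: "invariant_dist borel m \<nu>"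
  shows "invariant_dist (PpM p) (lift_walk p m) (lift_walk p m \<nu>)"
  unfolding invariant_dist_def
proof (intro conjI ballI)
  have "prob_space \<nu>" and sets_\<nu>: "sets \<nu> = sets borel"
    using inv by (auto simp: invariant_dist_def)
  have m_\<nu>: "m \<in> \<nu> \<rightarrow>\<^sub>M PpM p" using meas sets_\<nu> by (simp cong: measurable_cong_sets)
  show "prob_space (lift_walk p m \<nu>)"
    unfolding lift_walk_def by (rule prob_space.prob_space_distr[OF \<open>prob_space \<nu>\<close> m_\<nu>])
  show "sets (lift_walk p m \<nu>) = sets (PpM p)" by (simp add: lift_walk_def)
  fix A :: "'a measure set" assume A: "A \<in> sets (PpM p)"
  then have C: "space (PpM p) \<times> A \<in> sets (PpM p \<Otimes>\<^sub>M PpM p)" by simp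
  have m_A: "m -` A \<in> sets borel" using measurable_sets[OF meas A] by simp
  have "(\<integral>\<^sup>+ \<sigma>. emeasure (lift_walk p m \<sigma>) A \<partial>lift_walk p m \<nu>)
      = (\<integral>\<^sup>+ \<sigma>. emeasure (lift_walk p m \<sigma>) {\<tau>. (\<sigma>, \<tau>) \<in> space (PpM p) \<times> A} \<partial>lift_walk p m \<nu>)"
    by (intro nn_integral_cong) (simp add: lift_walk_def)
  also have "\<dots> = (\<integral>\<^sup>+ x. emeasure (m x) (m -` A) \<partial>\<nu>)"
    using nn_integral_lift_walk_section[OF \<open>0 < p\<close> meas sets_\<nu> C] measurable_space[OF meas]
    by (simp add: vimage_def)
  also have "\<dots> = emeasure \<nu> (m -` A)" using inv m_A by (simp add: invariant_dist_def)
  also have "\<dots> = emeasure (lift_walk p m \<nu>) A"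
    unfolding lift_walk_def using m_\<nu> A sets_eq_imp_space_eq[OF sets_\<nu>]
    by (simp add: emeasure_distr)
  finally show "(\<integral>\<^sup>+ \<sigma>. emeasure (lift_walk p m \<sigma>) A \<partial>lift_walk p m \<nu>) = emeasure (lift_walk p m \<nu>) A" .
qed

lemma reversible_lift_walk:
  fixes m :: "'a::{metric_space, second_countable_topology} \<Rightarrow> 'a measure"
  assumes "0 < p" and meas: "m \<in> borel \<rightarrow>\<^sub>M PpM p" and "sets \<nu> = sets borel"
    and rev: "reversible borel m \<nu>"
  shows "reversible (PpM p) (lift_walk p m) (lift_walk p m \<nu>)"
  unfolding reversible_def
proof
  fix C :: "('a measure \<times> 'a measure) set" assume C: "C \<in> sets (PpM p \<Otimes>\<^sub>M PpM p)"
  \<comment> \<open>the right-hand side is the section integral of the swapped set \<open>C_swap\<close>, and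
    reversibility of \<open>\<nu>\<close> is applied to the pull-back \<open>C'\<close> of \<open>C\<close> along \<open>m \<times> m\<close>\<close>
  define C_swap where "C_swap = (\<lambda>(\<sigma>, \<tau>). (\<tau>, \<sigma>)) -` C \<inter> space (PpM p \<Otimes>\<^sub>M PpM p)"
  have "C_swap \<in> sets (PpM p \<Otimes>\<^sub>M PpM p)"
    unfolding C_swap_def by (rule measurable_sets[OF _ C]) measurable
  have "C \<subseteq> space (PpM p \<Otimes>\<^sub>M PpM p)" using sets.sets_into_space[OF C] .
  then have sections_swap: "{\<sigma>. (\<tau>, \<sigma>) \<in> C_swap} = {\<sigma>. (\<sigma>, \<tau>) \<in> C}" for \<tau>
    by (auto simp: C_swap_def space_pair_measure)
  define C' where "C' = (\<lambda>z. (m (fst z), m (snd z))) -` C \<inter> space (borel \<Otimes>\<^sub>M borel)"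
  have "C' \<in> sets (borel \<Otimes>\<^sub>M borel)"
    unfolding C'_def by (rule measurable_sets[OF _ C]) (use meas in measurable)
  then have "(\<integral>\<^sup>+ x. emeasure (m x) {y. (x, y) \<in> C'} \<partial>\<nu>) = (\<integral>\<^sup>+ y. emeasure (m y) {x. (x, y) \<in> C'} \<partial>\<nu>)"
    using rev by (simp add: reversible_def)
  then have "(\<integral>\<^sup>+ x. emeasure (m x) {y. (m x, m y) \<in> C} \<partial>\<nu>) = (\<integral>\<^sup>+ x. emeasure (m x) {y. (m x, m y) \<in> C_swap} \<partial>\<nu>)"
    using measurable_space[OF meas] by (simp add: C'_def C_swap_def space_pair_measure)
  then show "(\<integral>\<^sup>+ \<sigma>. emeasure (lift_walk p m \<sigma>) {\<tau>. (\<sigma>, \<tau>) \<in> C} \<partial>lift_walk p m \<nu>)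
      = (\<integral>\<^sup>+ \<tau>. emeasure (lift_walk p m \<tau>) {\<sigma>. (\<sigma>, \<tau>) \<in> C} \<partial>lift_walk p m \<nu>)"
    using nn_integral_lift_walk_section[OF \<open>0 < p\<close> meas \<open>sets \<nu> = _\<close>] C \<open>C_swap \<in> _\<close>
    by (simp flip: sections_swap)
qed

theorem proposition4p1:
  fixes p :: real
    and m :: "'a::polish_space \<Rightarrow> 'a measure"
    and \<nu> :: "'a measure"
  assumes p: "1 \<le> p"
    and walk: "\<And>x. m x \<in> Pp p"
    and meas: "m \<in> borel \<rightarrow>\<^sub>M PpM p"
    and inv: "invariant_dist borel m \<nu>"
  shows "invariant_dist (PpM p) (lift_walk p m) (lift_walk p m \<nu>)
         \<and> (reversible borel m \<nu> \<longrightarrow> reversible (PpM p) (lift_walk p m) (lift_walk p m \<nu>))"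
proof -
  have "0 < p" using p by simp
  moreover have "sets \<nu> = sets borel" using inv by (simp add: invariant_dist_def)
  ultimately show ?thesis
    using invariant_dist_lift_walk[OF _ meas inv] reversible_lift_walk[OF _ meas] by blast
qed

end
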